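(* The class of decision trees over $\mathbb{R}^d$ of size $s$ has a lossless compression scheme of size at most $2ds$ with respect to the query set consisting of labels and the same-leaf oracle $\mathcal{O}_{\text{leaf}}$, and the inference rule $R_{\text{rect}}$.
   Context: A decision tree over $\mathbb{R}^d$ is a binary tree whose internal nodes are inequalities $x_i\ge b$ or $x_i\le b$ and whose leaves carry labels in $\{0,1\}$; $x$ is labeled by the leaf reached following the inequalities from the root. Its size is its number of leaves. The same-leaf oracle $\mathcal{O}_{\text{leaf}}(h,x,x')$ returns whether $x,x'$ reach the same leaf of $h$. For $S\subseteq\mathbb{R}^d$, $Q_h(S)$ is the set of all combinations of responses to label and same-leaf queries on $S$; $q(S)|_W$ is restriction to $W\subseteq S$. Inference rule $R_{\text{rect}}$: $x\in I_{R_{\text{rect}}}(q(S))$ iff $x$ lies in the smallest axis-aligned box containing some subset $T\subseteq S$ all of whose pairs are reported to lie in the same leaf (so $x$ is given that leaf's label). A lossless compression scheme of size $k$ w.r.t. this rule: for every tree $h$ of size $s$, every $S$ on which $h$ is constant, and every $q(S)\in Q_h(S)$, there is $W\subseteq S$, $|W|\le k$, with $I_{R_{\text{rect}}}(q(S))=I_{R_{\text{rect}}}(q(S)|_W)$. *)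

theory Defs
  imports "HOL-Analysis.Analysis"
begin

text \<open>An internal node
  Node i b ge l r tests x_i \<ge> b (if ge) or x_i \<le> b (if not ge);
  if the test holds go to l, otherwise to r. Leaves carry labels in {0,1} = bool.\<close>

datatype 'd dtree = Leaf bool | Node 'd real bool "'d dtree" "'d dtree"

definition node_test :: "'d \<Rightarrow> real \<Rightarrow> bool \<Rightarrow> real^'d \<Rightarrow> bool" where
  "node_test i b ge x = (if ge then x $ i \<ge> b else x $ i \<le> b)"

fun dt_size :: "'d dtree \<Rightarrow> nat" where
  "dt_size (Leaf _) = 1"
| "dt_size (Node _ _ _ l r) = dt_size l + dt_size r"

fun dt_label :: "'d dtree \<Rightarrow> real^'d \<Rightarrow> bool" where
  "dt_label (Leaf c) x = c"
| "dt_label (Node i b ge l r) x = (if node_test i b ge x then dt_label l x else dt_label r x)"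

text \<open>The leaf reached by x, identified by the root-to-leaf path of branch directions.\<close>
fun dt_leaf :: "'d dtree \<Rightarrow> real^'d \<Rightarrow> bool list" where
  "dt_leaf (Leaf c) x = []"
| "dt_leaf (Node i b ge l r) x =
     (if node_test i b ge x then True # dt_leaf l x else False # dt_leaf r x)"

definition same_leaf :: "'d dtree \<Rightarrow> real^'d \<Rightarrow> real^'d \<Rightarrow> bool" where
  "same_leaf h x y = (dt_leaf h x = dt_leaf h y)"

datatype 'd answer = LabelAns "real^'d" bool | SameAns "real^'d" "real^'d" bool

fun ans_points :: "'d answer \<Rightarrow> (real^'d) set" where
  "ans_points (LabelAns x _) = {x}"
| "ans_points (SameAns x y _) = {x, y}"

definition responses :: "'d dtree \<Rightarrow> (real^'d) set \<Rightarrow> 'd answer set" where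
  "responses h S = {LabelAns x (dt_label h x) | x. x \<in> S}
                 \<union> {SameAns x y (same_leaf h x y) | x y. x \<in> S \<and> y \<in> S}"

text \<open>Q_h(S): the set of all possible response combinations of h on S (the oracles are
  deterministic, so this is the single complete response set).\<close>
definition Q :: "'d dtree \<Rightarrow> (real^'d) set \<Rightarrow> 'd answer set set" where
  "Q h S = {responses h S}"

definition restr :: "'d answer set \<Rightarrow> (real^'d) set \<Rightarrow> 'd answer set" where
  "restr q W = {a \<in> q. ans_points a \<subseteq> W}"

definition bbox :: "(real^'d) set \<Rightarrow> (real^'d) set" where
  "bbox T = {x. \<forall>i. Min ((\<lambda>t. t $ i) ` T) \<le> x $ i \<and> x $ i \<le> Max ((\<lambda>t. t $ i) ` T)}"

definition I_rect :: "'d answer set \<Rightarrow> ((real^'d) \<times> bool) set" where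
  "I_rect q = {(x, l). \<exists>T. finite T \<and> T \<noteq> {} \<and>
      (\<forall>t\<in>T. LabelAns t l \<in> q) \<and>
      (\<forall>t\<in>T. \<forall>u\<in>T. t \<noteq> u \<longrightarrow> SameAns t u True \<in> q) \<and>
      x \<in> bbox T}"

end

theory Submission
  imports Defs
begin

text \<open>From exact responses on W, R_rect infers precisely the bounding boxes of the sets
  T \<subseteq> W lying in a single leaf, with that leaf's label. The points of S fall into at most s
  leaf cells. The bounding box of a cell is spanned by at most 2d of its points, a minimiser and a
  maximiser of each coordinate, and every box inferred from S lies in the box of one cell, so
  keeping these points for every cell loses no inference.\<close>

fun dt_paths :: "'d dtree \<Rightarrow> bool list set" where
  "dt_paths (Leaf c) = {[]}"
| "dt_paths (Node i b ge l r) = Cons True ` dt_paths l \<union> Cons False ` dt_paths r"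

lemma dt_leaf_in_dt_paths: "dt_leaf h x \<in> dt_paths h"
  by (induction h) auto

lemma finite_dt_paths: "finite (dt_paths h)"
  by (induction h) auto

lemma card_dt_paths: "card (dt_paths h) = dt_size h"
proof (induction h)
  case (Node i b ge l r)
  have "card (dt_paths (Node i b ge l r)) = card (Cons True ` dt_paths l) + card (Cons False ` dt_paths r)"
    unfolding dt_paths.simps by (rule card_Un_disjoint) (auto simp: finite_dt_paths)
  then show ?case
    using Node by (simp add: card_image)
qed simp

lemma card_dt_leaf_image_le: "card (dt_leaf h ` S) \<le> dt_size h"
proof -
  have "dt_leaf h ` S \<subseteq> dt_paths h"
    using dt_leaf_in_dt_paths by blast
  then show ?thesis
    using card_mono[OF finite_dt_paths] card_dt_paths by metis
qed

lemma dt_label_eq_if_same_leaf: "dt_leaf h x = dt_leaf h y \<Longrightarrow> dt_label h x = dt_label h y"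
  by (induction h) (auto split: if_splits)

lemma bbox_mono:
  assumes "finite A" "T \<noteq> {}" "T \<subseteq> A"
  shows "bbox T \<subseteq> bbox A"
proof -
  have "Min ((\<lambda>t. t $ i) ` A) \<le> Min ((\<lambda>t. t $ i) ` T)" "Max ((\<lambda>t. t $ i) ` T) \<le> Max ((\<lambda>t. t $ i) ` A)"
    for i using assms by (auto intro!: Min_antimono Max_mono)
  then show ?thesis
    unfolding bbox_def by (blast intro: order_trans)
qed

lemma exists_bbox_spanning_subset:
  fixes A :: "(real^'d) set"
  assumes "finite A" "A \<noteq> {}"
  obtains B where "B \<subseteq> A" "B \<noteq> {}" "card B \<le> 2 * CARD('d)" "bbox B = bbox A"
proof -
  have "Min ((\<lambda>t. t $ i) ` A) \<in> (\<lambda>t. t $ i) ` A" "Max ((\<lambda>t. t $ i) ` A) \<in> (\<lambda>t. t $ i) ` A" for i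
    using assms by (simp_all add: Min_in Max_in)
  then have "\<forall>i. \<exists>a\<in>A. a $ i = Min ((\<lambda>t. t $ i) ` A)" "\<forall>i. \<exists>a\<in>A. a $ i = Max ((\<lambda>t. t $ i) ` A)"
    by (metis imageE)+
  then obtain lo hi where lo: "\<And>i. lo i \<in> A \<and> lo i $ i = Min ((\<lambda>t. t $ i) ` A)"
    and hi: "\<And>i. hi i \<in> A \<and> hi i $ i = Max ((\<lambda>t. t $ i) ` A)"
    by metis
  define B where "B = range lo \<union> range hi"
  have "B \<subseteq> A" "B \<noteq> {}"
    using lo hi by (auto simp: B_def)
  have "card B \<le> card (range lo) + card (range hi)"
    unfolding B_def by (rule card_Un_le)
  also have "\<dots> \<le> 2 * CARD('d)"
    using card_image_le[of UNIV lo] card_image_le[of UNIV hi] by simp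
  finally have "card B \<le> 2 * CARD('d)" .
  have "Min ((\<lambda>t. t $ i) ` B) = Min ((\<lambda>t. t $ i) ` A)" for i
  proof (rule antisym)
    have "Min ((\<lambda>t. t $ i) ` B) \<le> lo i $ i"
      by (rule Min_le) (auto simp: B_def)
    then show "Min ((\<lambda>t. t $ i) ` B) \<le> Min ((\<lambda>t. t $ i) ` A)"
      using lo by simp
    show "Min ((\<lambda>t. t $ i) ` A) \<le> Min ((\<lambda>t. t $ i) ` B)"
      using \<open>B \<subseteq> A\<close> \<open>B \<noteq> {}\<close> assms(1) by (intro Min_antimono) auto
  qed
  moreover have "Max ((\<lambda>t. t $ i) ` B) = Max ((\<lambda>t. t $ i) ` A)" for i
  proof (rule antisym)
    have "hi i $ i \<le> Max ((\<lambda>t. t $ i) ` B)"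
      by (rule Max_ge) (auto simp: B_def)
    then show "Max ((\<lambda>t. t $ i) ` A) \<le> Max ((\<lambda>t. t $ i) ` B)"
      using hi by simp
    show "Max ((\<lambda>t. t $ i) ` B) \<le> Max ((\<lambda>t. t $ i) ` A)"
      using \<open>B \<subseteq> A\<close> \<open>B \<noteq> {}\<close> assms(1) by (intro Max_mono) auto
  qed
  ultimately have "bbox B = bbox A"
    by (simp add: bbox_def)
  then show ?thesis
    using that \<open>B \<subseteq> A\<close> \<open>B \<noteq> {}\<close> \<open>card B \<le> 2 * CARD('d)\<close> by blast
qed

lemma exists_cellwise_bbox_spanning_subset:
  fixes f :: "real^'d \<Rightarrow> 'a"
  assumes "finite S"
  obtains W where "W \<subseteq> S" "card W \<le> 2 * CARD('d) * card (f ` S)"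
    "\<And>p. p \<in> f ` S \<Longrightarrow> \<exists>B \<subseteq> W. B \<noteq> {} \<and> (\<forall>t\<in>B. f t = p) \<and> bbox B = bbox {x\<in>S. f x = p}"
proof -
  define cell_spec where "cell_spec p B \<longleftrightarrow> B \<subseteq> {x\<in>S. f x = p} \<and> B \<noteq> {} \<and>
      card B \<le> 2 * CARD('d) \<and> bbox B = bbox {x\<in>S. f x = p}" for p B
  have "\<forall>p\<in>f ` S. \<exists>B. cell_spec p B"
  proof
    fix p
    assume "p \<in> f ` S"
    then have "finite {x\<in>S. f x = p}" "{x\<in>S. f x = p} \<noteq> {}"
      using assms by auto
    then show "\<exists>B. cell_spec p B"
      unfolding cell_spec_def by (rule exists_bbox_spanning_subset) blast
  qed
  then obtain cell where "\<forall>p\<in>f ` S. cell_spec p (cell p)"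
    using bchoice by blast
  then have cell: "cell p \<subseteq> {x\<in>S. f x = p}" "cell p \<noteq> {}" "card (cell p) \<le> 2 * CARD('d)"
      "bbox (cell p) = bbox {x\<in>S. f x = p}" if "p \<in> f ` S" for p
    using that unfolding cell_spec_def by auto
  define W where "W = (\<Union>p\<in>f ` S. cell p)"
  have "W \<subseteq> S"
    using cell by (auto simp: W_def)
  have "card W \<le> (\<Sum>p\<in>f ` S. card (cell p))"
    unfolding W_def using assms by (intro card_UN_le) simp
  also have "\<dots> \<le> (\<Sum>p\<in>f ` S. 2 * CARD('d))"
    using cell(3) by (intro sum_mono)
  finally have "card W \<le> 2 * CARD('d) * card (f ` S)"
    by (simp add: mult.commute)
  moreover have "\<exists>B \<subseteq> W. B \<noteq> {} \<and> (\<forall>t\<in>B. f t = p) \<and> bbox B = bbox {x\<in>S. f x = p}"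
    if "p \<in> f ` S" for p
  proof -
    have "cell p \<subseteq> W"
      using that unfolding W_def by blast
    then show ?thesis
      using cell(1,2,4)[OF that] by blast
  qed
  ultimately show ?thesis
    by (rule that[OF \<open>W \<subseteq> S\<close>])
qed

definition rect_inferences :: "'d::finite dtree \<Rightarrow> (real^'d) set \<Rightarrow> ((real^'d) \<times> bool) set" where
  "rect_inferences h W = {(x, l). \<exists>T. finite T \<and> T \<noteq> {} \<and> T \<subseteq> W \<and> (\<forall>t\<in>T. dt_label h t = l) \<and>
      (\<forall>t\<in>T. \<forall>u\<in>T. dt_leaf h t = dt_leaf h u) \<and> x \<in> bbox T}"

lemma LabelAns_in_restr_responses [simp]:
  "LabelAns t l \<in> restr (responses h S) W \<longleftrightarrow> t \<in> S \<and> t \<in> W \<and> l = dt_label h t"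
  by (auto simp: restr_def responses_def)

lemma SameAns_in_restr_responses [simp]:
  "SameAns t u b \<in> restr (responses h S) W \<longleftrightarrow>
     t \<in> S \<and> u \<in> S \<and> t \<in> W \<and> u \<in> W \<and> b = same_leaf h t u"
  by (auto simp: restr_def responses_def)

lemma restr_responses_self: "restr (responses h S) S = responses h S"
  by (auto simp: restr_def responses_def)

lemma I_rect_restr_responses:
  assumes "W \<subseteq> S"
  shows "I_rect (restr (responses h S) W) = rect_inferences h W"
proof -
  let ?R = "restr (responses h S) W"
  have labels: "(\<forall>t\<in>T. LabelAns t l \<in> ?R) \<longleftrightarrow> T \<subseteq> W \<and> (\<forall>t\<in>T. dt_label h t = l)" for T l
    using assms by auto
  have same: "(\<forall>t\<in>T. \<forall>u\<in>T. t \<noteq> u \<longrightarrow> SameAns t u True \<in> ?R) \<longleftrightarrow>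
      (\<forall>t\<in>T. \<forall>u\<in>T. dt_leaf h t = dt_leaf h u)" if "T \<subseteq> W" for T
  proof
    assume pairs: "\<forall>t\<in>T. \<forall>u\<in>T. t \<noteq> u \<longrightarrow> SameAns t u True \<in> ?R"
    show "\<forall>t\<in>T. \<forall>u\<in>T. dt_leaf h t = dt_leaf h u"
    proof (intro ballI)
      fix t u
      assume "t \<in> T" "u \<in> T"
      then show "dt_leaf h t = dt_leaf h u"
        using pairs unfolding SameAns_in_restr_responses same_leaf_def by metis
    qed
  next
    assume leaves: "\<forall>t\<in>T. \<forall>u\<in>T. dt_leaf h t = dt_leaf h u"
    show "\<forall>t\<in>T. \<forall>u\<in>T. t \<noteq> u \<longrightarrow> SameAns t u True \<in> ?R"
    proof (intro ballI impI)
      fix t u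
      assume "t \<in> T" "u \<in> T"
      then have "t \<in> W" "u \<in> W" "same_leaf h t u"
        using that leaves unfolding same_leaf_def by blast+
      then show "SameAns t u True \<in> ?R"
        using assms by auto
    qed
  qed
  show ?thesis
    unfolding I_rect_def rect_inferences_def
    by (simp only: labels same conj_assoc cong: conj_cong)
qed

lemma rect_inferences_mono: "W \<subseteq> W' \<Longrightarrow> rect_inferences h W \<subseteq> rect_inferences h W'"
  unfolding rect_inferences_def by (clarsimp, meson order_trans)

lemma rect_inferences_eq_if_spans_leaf_boxes:
  assumes "W \<subseteq> S" "finite S"
    and spans: "\<And>p. p \<in> dt_leaf h ` S \<Longrightarrow>
      \<exists>B \<subseteq> W. B \<noteq> {} \<and> (\<forall>t\<in>B. dt_leaf h t = p) \<and> bbox B = bbox {x\<in>S. dt_leaf h x = p}"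
  shows "rect_inferences h W = rect_inferences h S"
proof
  show "rect_inferences h W \<subseteq> rect_inferences h S"
    using assms(1) by (rule rect_inferences_mono)
next
  show "rect_inferences h S \<subseteq> rect_inferences h W"
  proof (rule subrelI)
    fix x l
    assume "(x, l) \<in> rect_inferences h S"
    then obtain T where T: "T \<subseteq> S" "T \<noteq> {}" "\<forall>t\<in>T. dt_label h t = l"
      "\<forall>t\<in>T. \<forall>u\<in>T. dt_leaf h t = dt_leaf h u" "x \<in> bbox T"
      unfolding rect_inferences_def by blast
    obtain t0 where "t0 \<in> T"
      using T(2) by blast
    define p where "p = dt_leaf h t0"
    have "p \<in> dt_leaf h ` S"
      using \<open>t0 \<in> T\<close> T(1) by (auto simp: p_def)
    obtain B where B: "B \<subseteq> W" "B \<noteq> {}" "\<forall>t\<in>B. dt_leaf h t = p"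
      and box: "bbox B = bbox {x\<in>S. dt_leaf h x = p}"
      using spans[OF \<open>p \<in> dt_leaf h ` S\<close>] by (elim exE conjE)
    have "T \<subseteq> {x\<in>S. dt_leaf h x = p}"
      using T(1,4) \<open>t0 \<in> T\<close> unfolding p_def by blast
    then have "bbox T \<subseteq> bbox {x\<in>S. dt_leaf h x = p}"
      using assms(2) T(2) by (intro bbox_mono) auto
    then have "x \<in> bbox B"
      using T(5) box by blast
    moreover have "\<forall>t\<in>B. dt_label h t = l"
    proof
      fix t
      assume "t \<in> B"
      have "dt_label h t = dt_label h t0"
        by (rule dt_label_eq_if_same_leaf) (use B(3) \<open>t \<in> B\<close> in \<open>simp add: p_def\<close>)
      then show "dt_label h t = l"
        using T(3) \<open>t0 \<in> T\<close> by simp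
    qed
    moreover have "finite B"
      using B(1) assms(1,2) by (meson finite_subset order_trans)
    moreover have "\<forall>t\<in>B. \<forall>u\<in>B. dt_leaf h t = dt_leaf h u"
      using B(3) by simp
    ultimately show "(x, l) \<in> rect_inferences h W"
      using B(1,2) unfolding rect_inferences_def by blast
  qed
qed

theorem proposition4p3:
  fixes s :: nat
  shows "\<forall>(h :: 'd::finite dtree) (S :: (real^'d) set) q.
           dt_size h = s \<longrightarrow> finite S \<longrightarrow>
           (\<forall>x\<in>S. \<forall>y\<in>S. dt_label h x = dt_label h y) \<longrightarrow> q \<in> Q h S \<longrightarrow>
           (\<exists>W \<subseteq> S. card W \<le> 2 * CARD('d) * s \<and> I_rect q = I_rect (restr q W))"
proof (intro allI impI)
  fix h :: "'d dtree" and S :: "(real^'d) set" and q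
  assume "dt_size h = s" "finite S" "q \<in> Q h S"
  then have q: "q = responses h S"
    by (simp add: Q_def)
  obtain W where "W \<subseteq> S" and card_W: "card W \<le> 2 * CARD('d) * card (dt_leaf h ` S)"
    and spans: "\<And>p. p \<in> dt_leaf h ` S \<Longrightarrow>
      \<exists>B \<subseteq> W. B \<noteq> {} \<and> (\<forall>t\<in>B. dt_leaf h t = p) \<and> bbox B = bbox {x\<in>S. dt_leaf h x = p}"
    by (rule exists_cellwise_bbox_spanning_subset[OF \<open>finite S\<close>, where f = "dt_leaf h"]) iprover
  have "card W \<le> 2 * CARD('d) * s"
    using card_W card_dt_leaf_image_le[of h S] \<open>dt_size h = s\<close> by (meson le_trans mult_le_mono2)
  moreover have "I_rect q = I_rect (restr q W)"
  proof -
    have "I_rect q = rect_inferences h S"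
      using I_rect_restr_responses[of S S h] by (simp add: q restr_responses_self)
    also have "\<dots> = rect_inferences h W"
      using rect_inferences_eq_if_spans_leaf_boxes[OF \<open>W \<subseteq> S\<close> \<open>finite S\<close> spans] by simp
    also have "\<dots> = I_rect (restr q W)"
      using I_rect_restr_responses[OF \<open>W \<subseteq> S\<close>] by (simp add: q)
    finally show ?thesis .
  qed
  ultimately show "\<exists>W \<subseteq> S. card W \<le> 2 * CARD('d) * s \<and> I_rect q = I_rect (restr q W)"
    using \<open>W \<subseteq> S\<close> by blast
qed

end
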